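(* Let $X_1,\dots,X_n$ ($n\ge 2$) and $Y$ be jointly distributed discrete random variables with $I(\mathbf X;Y)>0$, where $\mathbf X=(X_1,\dots,X_n)$, and let $\Pi$ be a partial information decomposition (as defined in the context) with $\Pi(\alpha)\ge 0$ for all $\alpha\in\mathcal A_n$. Then $$\frac{\sum_{k=2}^n I_{\mathrm r}^{(k)}(\mathbf X;Y)}{I(\mathbf X;Y)}\ge\frac{\bar r-1}{n-1}\qquad\text{and}\qquad\frac{\sum_{k=2}^n I_{\mathrm v}^{(k)}(\mathbf X;Y)}{I(\mathbf X;Y)}\ge\frac{\bar v-1}{n-1}.$$
   Context: Notation: $[n]=\{1,\dots,n\}$. For $\mathbf a\subseteq[n]$, $X_{\mathbf a}=(X_i)_{i\in\mathbf a}$. Antichains: $\mathcal A_n$ is the set of all nonempty collections $\alpha$ of nonempty subsets of $[n]$ such that no element of $\alpha$ is a proper subset of another element of $\alpha$. Partial information decomposition (PID): any function $\Pi:\mathcal A_n\to\mathbb R$ satisfying, for every nonempty $\mathbf a\subseteq[n]$, $$I(X_{\mathbf a};Y)=\sum_{\alpha\in\mathcal A_n:\ \exists \mathbf b\in\alpha,\ \mathbf b\subseteq \mathbf a}\Pi(\alpha).$$ Degree of redundancy: $r(\alpha)=|\{i\in[n]: \{i\}\in\alpha\}|$. Degree of vulnerability: $v(\alpha)=|\{i\in[n]: i\in\mathbf b\text{ for all }\mathbf b\in\alpha\}|$. $I_{\mathrm r}^{(k)}(\mathbf X;Y)=\sum_{\alpha:\ r(\alpha)=k}\Pi(\alpha)$,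 $I_{\mathrm v}^{(k)}(\mathbf X;Y)=\sum_{\alpha:\ v(\alpha)=k}\Pi(\alpha)$. Average degrees: $\bar r=\sum_{k=0}^n k\,I_{\mathrm r}^{(k)}(\mathbf X;Y)/I(\mathbf X;Y)$ and $\bar v=\sum_{k=0}^n k\,I_{\mathrm v}^{(k)}(\mathbf X;Y)/I(\mathbf X;Y)$. *)

theory Defs
  imports "HOL-Probability.Probability"
begin

definition Xsub :: "(nat \<Rightarrow> 'a \<Rightarrow> 'b) \<Rightarrow> nat set \<Rightarrow> 'a \<Rightarrow> (nat \<Rightarrow> 'b)" where
  "Xsub X a = (\<lambda>\<omega>. restrict (\<lambda>i. X i \<omega>) a)"

definition MI :: "'a measure \<Rightarrow> (nat \<Rightarrow> 'a \<Rightarrow> 'b::countable) \<Rightarrow> ('a \<Rightarrow> 'c::countable) \<Rightarrow> nat set \<Rightarrow> real" where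
  "MI M X Y a = prob_space.mutual_information M 2 (count_space UNIV) (count_space UNIV) (Xsub X a) Y"

definition antichains :: "nat \<Rightarrow> nat set set set" where
  "antichains n = {\<alpha>. \<alpha> \<noteq> {} \<and> (\<forall>b\<in>\<alpha>. b \<noteq> {} \<and> b \<subseteq> {1..n}) \<and> (\<forall>b\<in>\<alpha>. \<forall>c\<in>\<alpha>. \<not> b \<subset> c)}"

definition is_PID :: "'a measure \<Rightarrow> nat \<Rightarrow> (nat \<Rightarrow> 'a \<Rightarrow> 'b::countable) \<Rightarrow> ('a \<Rightarrow> 'c::countable)
    \<Rightarrow> (nat set set \<Rightarrow> real) \<Rightarrow> bool" where
  "is_PID M n X Y PI \<longleftrightarrow> (\<forall>a. a \<noteq> {} \<and> a \<subseteq> {1..n} \<longrightarrow>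
     MI M X Y a = (\<Sum>\<alpha>\<in>{\<alpha>\<in>antichains n. \<exists>b\<in>\<alpha>. b \<subseteq> a}. PI \<alpha>))"

definition red_deg :: "nat \<Rightarrow> nat set set \<Rightarrow> nat" where
  "red_deg n \<alpha> = card {i\<in>{1..n}. {i} \<in> \<alpha>}"

definition vul_deg :: "nat \<Rightarrow> nat set set \<Rightarrow> nat" where
  "vul_deg n \<alpha> = card {i\<in>{1..n}. \<forall>b\<in>\<alpha>. i \<in> b}"

definition I_red :: "nat \<Rightarrow> (nat set set \<Rightarrow> real) \<Rightarrow> nat \<Rightarrow> real" where
  "I_red n PI k = (\<Sum>\<alpha>\<in>{\<alpha>\<in>antichains n. red_deg n \<alpha> = k}. PI \<alpha>)"

definition I_vul :: "nat \<Rightarrow> (nat set set \<Rightarrow> real) \<Rightarrow> nat \<Rightarrow> real" where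
  "I_vul n PI k = (\<Sum>\<alpha>\<in>{\<alpha>\<in>antichains n. vul_deg n \<alpha> = k}. PI \<alpha>)"

text \<open>Average degrees of redundancy and vulnerability; I_tot = I(X;Y) = I(X_[n];Y).\<close>
definition avg_red :: "nat \<Rightarrow> (nat set set \<Rightarrow> real) \<Rightarrow> real \<Rightarrow> real" where
  "avg_red n PI I_tot = (\<Sum>k=0..n. real k * I_red n PI k) / I_tot"

definition avg_vul :: "nat \<Rightarrow> (nat set set \<Rightarrow> real) \<Rightarrow> real \<Rightarrow> real" where
  "avg_vul n PI I_tot = (\<Sum>k=0..n. real k * I_vul n PI k) / I_tot"

end

theory Submission
  imports Defs
begin

text \<open>Grouping the non-negative atoms \<open>\<Pi>(\<alpha>)\<close> by degree \<open>k \<in> {0..n}\<close> gives weights \<open>p\<^sub>k\<close>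
  that sum to \<open>I(X;Y)\<close>, since every antichain contains a subset of \<open>[n]\<close>. The bound is then
  \<open>\<Sum>\<^sub>k (k - 1) p\<^sub>k \<le> (n - 1) \<Sum>\<^bsub>k\<ge>2\<^esub> p\<^sub>k\<close>: the term \<open>k = 0\<close> is non-positive, the term
  \<open>k = 1\<close> vanishes, and \<open>k - 1 \<le> n - 1\<close> for the rest.\<close>

lemma weighted_sum_minus_sum_le:
  fixes p :: "nat \<Rightarrow> real"
  assumes nonneg: "\<And>k. k \<le> n \<Longrightarrow> 0 \<le> p k" and "n \<ge> 1"
  shows "(\<Sum>k=0..n. real k * p k) - (\<Sum>k=0..n. p k) \<le> (real n - 1) * (\<Sum>k=2..n. p k)"
proof -
  have split: "{0..n} = {0, 1} \<union> {2..n}" using \<open>n \<ge> 1\<close> by auto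
  have "(\<Sum>k=0..n. real k * p k) - (\<Sum>k=0..n. p k) = (\<Sum>k=0..n. (real k - 1) * p k)"
    by (simp add: algebra_simps sum_subtractf)
  also have "\<dots> = - p 0 + (\<Sum>k=2..n. (real k - 1) * p k)"
    by (subst split, subst sum.union_disjoint) auto
  also have "\<dots> \<le> (\<Sum>k=2..n. (real n - 1) * p k)"
  proof -
    have "(\<Sum>k=2..n. (real k - 1) * p k) \<le> (\<Sum>k=2..n. (real n - 1) * p k)"
      by (rule sum_mono) (auto intro!: mult_right_mono nonneg)
    then show ?thesis using nonneg[of 0] by linarith
  qed
  also have "\<dots> = (real n - 1) * (\<Sum>k=2..n. p k)"
    by (simp add: sum_distrib_left)
  finally show ?thesis .
qed

lemma normalized_weighted_sum_bound:
  fixes p :: "nat \<Rightarrow> real"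
  assumes "\<And>k. k \<le> n \<Longrightarrow> 0 \<le> p k" and "n \<ge> 2" and pos: "(\<Sum>k=0..n. p k) > 0"
  shows "(\<Sum>k=2..n. p k) / (\<Sum>k=0..n. p k)
           \<ge> ((\<Sum>k=0..n. real k * p k) / (\<Sum>k=0..n. p k) - 1) / (real n - 1)"
proof -
  let ?S = "\<Sum>k=0..n. p k" and ?W = "\<Sum>k=0..n. real k * p k" and ?H = "\<Sum>k=2..n. p k"
  have n1: "real n - 1 > 0" using \<open>n \<ge> 2\<close> by simp
  have "?W - ?S \<le> (real n - 1) * ?H"
    using assms(1,2) by (intro weighted_sum_minus_sum_le) auto
  then have "(?W - ?S) / (real n - 1) \<le> ?H"
    using n1 by (simp add: pos_divide_le_eq mult.commute)
  then have "(?W - ?S) / (real n - 1) / ?S \<le> ?H / ?S"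
    using pos by (intro divide_right_mono) auto
  moreover have "(?W / ?S - 1) / (real n - 1) = (?W - ?S) / (real n - 1) / ?S"
    using pos n1 by (simp add: field_simps)
  ultimately show ?thesis by simp
qed

lemma sum_group_by_degree:
  fixes deg :: "'a \<Rightarrow> nat" and g :: "'a \<Rightarrow> real"
  assumes "finite A" and "\<And>x. x \<in> A \<Longrightarrow> deg x \<le> n"
  shows "(\<Sum>k=0..n. \<Sum>x\<in>{x\<in>A. deg x = k}. g x) = (\<Sum>x\<in>A. g x)"
proof -
  have "deg ` A \<subseteq> {0..n}" using assms(2) by auto
  from sum.group[OF \<open>finite A\<close> finite_atLeastAtMost this, of g] show ?thesis by simp
qed

lemma high_degree_share_ge:
  fixes A :: "'a set" and deg :: "'a \<Rightarrow> nat" and g :: "'a \<Rightarrow> real"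
  defines "p \<equiv> \<lambda>k. \<Sum>x\<in>{x\<in>A. deg x = k}. g x"
  assumes "finite A" and "\<And>x. x \<in> A \<Longrightarrow> deg x \<le> n" and "\<And>x. x \<in> A \<Longrightarrow> 0 \<le> g x"
    and "n \<ge> 2" and "(\<Sum>x\<in>A. g x) > 0"
  shows "(\<Sum>k=2..n. p k) / (\<Sum>x\<in>A. g x)
           \<ge> ((\<Sum>k=0..n. real k * p k) / (\<Sum>x\<in>A. g x) - 1) / (real n - 1)"
proof -
  have "(\<Sum>k=0..n. p k) = (\<Sum>x\<in>A. g x)"
    unfolding p_def using assms(2,3) by (rule sum_group_by_degree)
  moreover have "0 \<le> p k" for k
    unfolding p_def using assms(4) by (auto intro: sum_nonneg)
  ultimately show ?thesis
    using normalized_weighted_sum_bound[of n p] assms(5,6) by simp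
qed

lemma finite_antichains: "finite (antichains n)"
proof (rule finite_subset)
  show "antichains n \<subseteq> Pow (Pow {1..n})" unfolding antichains_def by auto
qed simp

lemma card_Collect_atLeastAtMost_le: "card {i\<in>{1..n}. P i} \<le> n"
proof -
  have "card {i\<in>{1..n}. P i} \<le> card {1..n}" by (rule card_mono) auto
  then show ?thesis by simp
qed

lemma PID_total_MI:
  assumes "is_PID M n X Y PI" and "n \<ge> 1"
  shows "MI M X Y {1..n} = (\<Sum>\<alpha>\<in>antichains n. PI \<alpha>)"
proof -
  have "{\<alpha>\<in>antichains n. \<exists>b\<in>\<alpha>. b \<subseteq> {1..n}} = antichains n"
    unfolding antichains_def by auto
  then show ?thesis
    using assms unfolding is_PID_def by auto
qed

theorem proposition6:
  fixes M :: "'a measure" and n :: nat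
    and X :: "nat \<Rightarrow> 'a \<Rightarrow> 'b::countable" and Y :: "'a \<Rightarrow> 'c::countable"
    and PI :: "nat set set \<Rightarrow> real"
  assumes "prob_space M"
    and "\<And>i. i \<in> {1..n} \<Longrightarrow> X i \<in> measurable M (count_space UNIV)"
    and "Y \<in> measurable M (count_space UNIV)"
    and "n \<ge> 2"
    and "MI M X Y {1..n} > 0"
    and "is_PID M n X Y PI"
    and "\<And>\<alpha>. \<alpha> \<in> antichains n \<Longrightarrow> PI \<alpha> \<ge> 0"
  shows "(\<Sum>k=2..n. I_red n PI k) / MI M X Y {1..n}
           \<ge> (avg_red n PI (MI M X Y {1..n}) - 1) / (real n - 1)
      \<and> (\<Sum>k=2..n. I_vul n PI k) / MI M X Y {1..n}
           \<ge> (avg_vul n PI (MI M X Y {1..n}) - 1) / (real n - 1)"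
proof -
  have total: "MI M X Y {1..n} = (\<Sum>\<alpha>\<in>antichains n. PI \<alpha>)"
    using assms(4,6) by (intro PID_total_MI) auto
  then have pos: "(\<Sum>\<alpha>\<in>antichains n. PI \<alpha>) > 0" using assms(5) by simp
  have deg_le: "red_deg n \<alpha> \<le> n" "vul_deg n \<alpha> \<le> n" for \<alpha>
    unfolding red_deg_def vul_deg_def by (rule card_Collect_atLeastAtMost_le)+
  note share = high_degree_share_ge[OF finite_antichains _ assms(7) assms(4) pos]
  show ?thesis
    unfolding I_red_def avg_red_def I_vul_def avg_vul_def total
    using share[where deg = "red_deg n"] share[where deg = "vul_deg n"] deg_le by blast
qed

end
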